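(* Let $(A,\mathcal N,\mathcal P,\lambda)$ be a game. Let $A^\perp$ be the event structure with the same events, order and conflict as $A$ but with every polarity reversed. Equip $A^\perp$ with the group $\mathcal N_{A^\perp}:=\mathcal P$ (acting on events as on $A$), the group $\mathcal P_{A^\perp}:=\mathcal N$ (acting on events as on $A$), and the function $\lambda_{A^\perp}:\mathcal P\times\mathcal N\to\mathcal N\times\mathcal P$ defined as the composite $\mathit{isw}\circ\lambda\circ\mathit{isw}$, where $\mathit{isw}$ denotes the invert-and-swap maps $\mathcal P\times\mathcal N\to\mathcal N\times\mathcal P$, $(\beta,\alpha)\mapsto(\alpha^{-1},\beta^{-1})$, and $\mathcal N\times\mathcal P\to\mathcal P\times\mathcal N$, $(\alpha,\beta)\mapsto(\beta^{-1},\alpha^{-1})$. Explicitly, $\lambda_{A^\perp}(\beta,\alpha)=(\alpha'^{-1},\beta'^{-1})$ where $(\beta',\alpha')=\lambda(\alpha^{-1},\beta^{-1})$. Then $(A^\perp,\mathcal P,\mathcal N,\lambda_{A^\perp})$ is a game (the dual of $A$).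
   Context: An event structure (with polarity) is a set $A$ with a partial order $\leq$ such that every element has finitely many elements below it, an irreflexive symmetric relation $\#$ (conflict) that is hereditary (if $a\leq a'$ and $a\# b$ then $a'\# b$), and a polarity function $A\to\{-,+\}$. A configuration is a finite $\leq$-down-closed subset containing no two elements in conflict; $\mathrm{Conf}(A)$ is the set of configurations. For $x,y\in\mathrm{Conf}(A)$, $x\subseteq^+y$ (resp. $x\subseteq^-y$) means $x\subseteq y$ and all elements of $y\setminus x$ are positive (resp. negative). An automorphism of $A$ is a bijection $A\to A$ preserving and reflecting $\leq$, $\#$ and polarity. An automorphism $\alpha$ fixes $x\in\mathrm{Conf}(A)$ if $\alpha(a)=a$ for all $a\in x$. An automorphism $\alpha$ is negative if whenever $\alpha$ fixes $x\in\mathrm{Conf}(A)$ and $x\subseteq^+y\in\mathrm{Conf}(A)$, $\alpha$ fixes $y$; it is positive if the same holds with $\subseteq^-$ in place of $\subseteq^+$. An action of a group $G$ on $A$ is a group homomorphism from $G$ to the automorphism group of $A$ (we write $g(a)$ for the action); it is negative (resp. positive) if every element acts by a negative (resp. positive) automorphism. A game is a tuple $(A,\mathcal N,\mathcal P,\lambda)$ where $A$ is an event structure, $\mathcal N$ is a group with a negative action on $A$, $\mathcal P$ is a group with a positive action on $A$, and $\lambda:\mathcal N\times\mathcal P\to\mathcal P\times\mathcal N$ is a function satisfying, for all $\alpha,\alpha'\in\mathcal N$, $\beta,\beta'\in\mathcal P$ (with $e$ the units): (i) $\lambda(e,\beta)=(\beta,e)$ and $\lambda(\alpha,e)=(e,\alpha)$;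 (ii) if $\lambda(\alpha',\beta)=(\beta_1,\alpha_1)$ and $\lambda(\alpha,\beta_1)=(\beta_2,\alpha_2)$ then $\lambda(\alpha\alpha',\beta)=(\beta_2,\alpha_2\alpha_1)$; (iii) if $\lambda(\alpha,\beta)=(\beta_1,\alpha_1)$ and $\lambda(\alpha_1,\beta')=(\beta_2,\alpha_2)$ then $\lambda(\alpha,\beta\beta')=(\beta_1\beta_2,\alpha_2)$; (iv) if $\lambda(\alpha,\beta)=(\beta',\alpha')$ then $\alpha(\beta(a))=\beta'(\alpha'(a))$ for all $a\in A$. (Conditions (i)–(iii) say $\lambda$ is a distributive law between the monads $\mathcal N\times(-)$ and $\mathcal P\times(-)$ on $\mathbf{Set}$.) *)

theory Defs
  imports "HOL-Algebra.Group"
begin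

text \<open>Event structures with polarity. Polarity: True = positive (+), False = negative (-).\<close>
record 'a evstruct =
  ev  :: "'a set"
  le  :: "'a \<Rightarrow> 'a \<Rightarrow> bool"
  cf  :: "'a \<Rightarrow> 'a \<Rightarrow> bool"
  pol :: "'a \<Rightarrow> bool"

definition event_structure :: "'a evstruct \<Rightarrow> bool" where
  "event_structure E \<longleftrightarrow>
     (\<forall>a b. le E a b \<longrightarrow> a \<in> ev E \<and> b \<in> ev E) \<and>
     (\<forall>a\<in>ev E. le E a a) \<and>
     (\<forall>a b. le E a b \<and> le E b a \<longrightarrow> a = b) \<and>
     (\<forall>a b c. le E a b \<and> le E b c \<longrightarrow> le E a c) \<and>
     (\<forall>a\<in>ev E. finite {b. le E b a}) \<and>
     (\<forall>a b. cf E a b \<longrightarrow> a \<in> ev E \<and> b \<in> ev E) \<and>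
     (\<forall>a. \<not> cf E a a) \<and>
     (\<forall>a b. cf E a b \<longrightarrow> cf E b a) \<and>
     (\<forall>a a' b. le E a a' \<and> cf E a b \<longrightarrow> cf E a' b)"

definition conf :: "'a evstruct \<Rightarrow> 'a set set" where
  "conf E = {x. finite x \<and> x \<subseteq> ev E \<and>
                (\<forall>a\<in>x. \<forall>b. le E b a \<longrightarrow> b \<in> x) \<and>
                (\<forall>a\<in>x. \<forall>b\<in>x. \<not> cf E a b)}"

definition pos_ext :: "'a evstruct \<Rightarrow> 'a set \<Rightarrow> 'a set \<Rightarrow> bool" where
  "pos_ext E x y \<longleftrightarrow> x \<subseteq> y \<and> (\<forall>a\<in>y - x. pol E a)"

definition neg_ext :: "'a evstruct \<Rightarrow> 'a set \<Rightarrow> 'a set \<Rightarrow> bool" where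
  "neg_ext E x y \<longleftrightarrow> x \<subseteq> y \<and> (\<forall>a\<in>y - x. \<not> pol E a)"

definition automorphism :: "'a evstruct \<Rightarrow> ('a \<Rightarrow> 'a) \<Rightarrow> bool" where
  "automorphism E f \<longleftrightarrow> bij_betw f (ev E) (ev E) \<and>
     (\<forall>a\<in>ev E. \<forall>b\<in>ev E. le E (f a) (f b) \<longleftrightarrow> le E a b) \<and>
     (\<forall>a\<in>ev E. \<forall>b\<in>ev E. cf E (f a) (f b) \<longleftrightarrow> cf E a b) \<and>
     (\<forall>a\<in>ev E. pol E (f a) = pol E a)"

definition fixes_conf :: "('a \<Rightarrow> 'a) \<Rightarrow> 'a set \<Rightarrow> bool" where
  "fixes_conf f x \<longleftrightarrow> (\<forall>a\<in>x. f a = a)"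

definition negative_aut :: "'a evstruct \<Rightarrow> ('a \<Rightarrow> 'a) \<Rightarrow> bool" where
  "negative_aut E f \<longleftrightarrow> automorphism E f \<and>
     (\<forall>x\<in>conf E. \<forall>y\<in>conf E. fixes_conf f x \<and> pos_ext E x y \<longrightarrow> fixes_conf f y)"

definition positive_aut :: "'a evstruct \<Rightarrow> ('a \<Rightarrow> 'a) \<Rightarrow> bool" where
  "positive_aut E f \<longleftrightarrow> automorphism E f \<and>
     (\<forall>x\<in>conf E. \<forall>y\<in>conf E. fixes_conf f x \<and> neg_ext E x y \<longrightarrow> fixes_conf f y)"

definition group_action :: "('g, 'm) monoid_scheme \<Rightarrow> 'a evstruct \<Rightarrow> ('g \<Rightarrow> 'a \<Rightarrow> 'a) \<Rightarrow> bool" where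
  "group_action G E act \<longleftrightarrow> group G \<and>
     (\<forall>g\<in>carrier G. automorphism E (act g)) \<and>
     (\<forall>g\<in>carrier G. \<forall>h\<in>carrier G. \<forall>a\<in>ev E. act (g \<otimes>\<^bsub>G\<^esub> h) a = act g (act h a))"

definition negative_action :: "('g, 'm) monoid_scheme \<Rightarrow> 'a evstruct \<Rightarrow> ('g \<Rightarrow> 'a \<Rightarrow> 'a) \<Rightarrow> bool" where
  "negative_action G E act \<longleftrightarrow> group_action G E act \<and> (\<forall>g\<in>carrier G. negative_aut E (act g))"

definition positive_action :: "('g, 'm) monoid_scheme \<Rightarrow> 'a evstruct \<Rightarrow> ('g \<Rightarrow> 'a \<Rightarrow> 'a) \<Rightarrow> bool" where
  "positive_action G E act \<longleftrightarrow> group_action G E act \<and> (\<forall>g\<in>carrier G. positive_aut E (act g))"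

definition game ::
  "'a evstruct \<Rightarrow> ('n, 'm1) monoid_scheme \<Rightarrow> ('n \<Rightarrow> 'a \<Rightarrow> 'a)
     \<Rightarrow> ('p, 'm2) monoid_scheme \<Rightarrow> ('p \<Rightarrow> 'a \<Rightarrow> 'a) \<Rightarrow> ('n \<Rightarrow> 'p \<Rightarrow> 'p \<times> 'n) \<Rightarrow> bool" where
  "game E N actN P actP lam \<longleftrightarrow>
     event_structure E \<and> negative_action N E actN \<and> positive_action P E actP \<and>
     (\<forall>\<alpha>\<in>carrier N. \<forall>\<beta>\<in>carrier P. lam \<alpha> \<beta> \<in> carrier P \<times> carrier N) \<and>
     (\<forall>\<beta>\<in>carrier P. lam \<one>\<^bsub>N\<^esub> \<beta> = (\<beta>, \<one>\<^bsub>N\<^esub>)) \<and>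
     (\<forall>\<alpha>\<in>carrier N. lam \<alpha> \<one>\<^bsub>P\<^esub> = (\<one>\<^bsub>P\<^esub>, \<alpha>)) \<and>
     (\<forall>\<alpha>\<in>carrier N. \<forall>\<alpha>'\<in>carrier N. \<forall>\<beta>\<in>carrier P.
        lam (\<alpha> \<otimes>\<^bsub>N\<^esub> \<alpha>') \<beta> =
          (fst (lam \<alpha> (fst (lam \<alpha>' \<beta>))),
           snd (lam \<alpha> (fst (lam \<alpha>' \<beta>))) \<otimes>\<^bsub>N\<^esub> snd (lam \<alpha>' \<beta>))) \<and>
     (\<forall>\<alpha>\<in>carrier N. \<forall>\<beta>\<in>carrier P. \<forall>\<beta>'\<in>carrier P.
        lam \<alpha> (\<beta> \<otimes>\<^bsub>P\<^esub> \<beta>') =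
          (fst (lam \<alpha> \<beta>) \<otimes>\<^bsub>P\<^esub> fst (lam (snd (lam \<alpha> \<beta>)) \<beta>'),
           snd (lam (snd (lam \<alpha> \<beta>)) \<beta>'))) \<and>
     (\<forall>\<alpha>\<in>carrier N. \<forall>\<beta>\<in>carrier P. \<forall>a\<in>ev E.
        actN \<alpha> (actP \<beta> a) = actP (fst (lam \<alpha> \<beta>)) (actN (snd (lam \<alpha> \<beta>)) a))"

definition dual_es :: "'a evstruct \<Rightarrow> 'a evstruct" where
  "dual_es E = E\<lparr>pol := (\<lambda>a. \<not> pol E a)\<rparr>"

definition dual_lam ::
  "('n, 'm1) monoid_scheme \<Rightarrow> ('p, 'm2) monoid_scheme \<Rightarrow> ('n \<Rightarrow> 'p \<Rightarrow> 'p \<times> 'n) \<Rightarrow> ('p \<Rightarrow> 'n \<Rightarrow> 'n \<times> 'p)" where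
  "dual_lam N P lam = (\<lambda>\<beta> \<alpha>.
     (let r = lam (inv\<^bsub>N\<^esub> \<alpha>) (inv\<^bsub>P\<^esub> \<beta>) in (inv\<^bsub>N\<^esub> (snd r), inv\<^bsub>P\<^esub> (fst r))))"

end

theory Submission
  imports Defs
begin

text \<open>Reversing polarities leaves events, order and conflict alone and merely exchanges the
  roles of negative and positive automorphisms, so the only content lies in the dual law.
  Inversion is an anti-isomorphism of groups, so conjugating \<open>\<lambda>\<close> by the invert-and-swap
  maps turns each of its two multiplicativity laws into the other one for the dual, and turns
  the interchange law \<open>\<alpha> \<beta> = \<beta>' \<alpha>'\<close> into \<open>\<beta> \<alpha> = \<alpha>'\<inverse> \<beta>'\<inverse>\<close> after inverting both sides.\<close>

lemma group_action_closed:
  assumes "group_action G E act" "g \<in> carrier G" "a \<in> ev E"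
  shows "act g a \<in> ev E"
  using assms unfolding group_action_def automorphism_def bij_betw_def by blast

lemma group_action_one:
  assumes "group_action G E act" "a \<in> ev E"
  shows "act \<one>\<^bsub>G\<^esub> a = a"
proof -
  interpret group G using assms(1) unfolding group_action_def by blast
  have "act \<one>\<^bsub>G\<^esub> (act \<one>\<^bsub>G\<^esub> a) = act \<one>\<^bsub>G\<^esub> a"
    using assms unfolding group_action_def by (metis one_closed l_one)
  moreover have "inj_on (act \<one>\<^bsub>G\<^esub>) (ev E)"
    using assms(1) unfolding group_action_def automorphism_def bij_betw_def by blast
  ultimately show ?thesis
    using assms group_action_closed one_closed by (metis inj_on_def)
qed

lemma group_action_inv_cancel:
  assumes "group_action G E act" "g \<in> carrier G" "a \<in> ev E"
  shows "act g (act (inv\<^bsub>G\<^esub> g) a) = a" "act (inv\<^bsub>G\<^esub> g) (act g a) = a"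
proof -
  interpret group G using assms(1) unfolding group_action_def by blast
  have mult: "act (h \<otimes>\<^bsub>G\<^esub> k) a = act h (act k a)" if "h \<in> carrier G" "k \<in> carrier G" for h k
    using assms(1,3) that unfolding group_action_def by blast
  show "act g (act (inv\<^bsub>G\<^esub> g) a) = a"
    using mult[of g "inv\<^bsub>G\<^esub> g"] assms group_action_one[OF assms(1,3)] by simp
  show "act (inv\<^bsub>G\<^esub> g) (act g a) = a"
    using mult[of "inv\<^bsub>G\<^esub> g" g] assms group_action_one[OF assms(1,3)] by simp
qed

lemma dual_es_simps [simp]:
  "ev (dual_es E) = ev E" "le (dual_es E) = le E" "cf (dual_es E) = cf E"
  "pol (dual_es E) a = (\<not> pol E a)"
  unfolding dual_es_def by simp_all

lemma conf_dual_es [simp]: "conf (dual_es E) = conf E"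
  unfolding conf_def by simp

lemma event_structure_dual_es [simp]: "event_structure (dual_es E) = event_structure E"
  unfolding event_structure_def by simp

lemma negative_action_dual_es [simp]:
  "negative_action G (dual_es E) act = positive_action G E act"
  unfolding negative_action_def positive_action_def group_action_def
    negative_aut_def positive_aut_def automorphism_def pos_ext_def neg_ext_def
  by simp

lemma positive_action_dual_es [simp]:
  "positive_action G (dual_es E) act = negative_action G E act"
  unfolding negative_action_def positive_action_def group_action_def
    negative_aut_def positive_aut_def automorphism_def pos_ext_def neg_ext_def
  by simp

locale distributive_law = N: group N + P: group P
  for N :: "('n, 'm1) monoid_scheme" and P :: "('p, 'm2) monoid_scheme" +
  fixes lam :: "'n \<Rightarrow> 'p \<Rightarrow> 'p \<times> 'n"
  assumes lam_closed: "\<lbrakk>\<alpha> \<in> carrier N; \<beta> \<in> carrier P\<rbrakk> \<Longrightarrow> lam \<alpha> \<beta> \<in> carrier P \<times> carrier N"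
    and lam_one_left: "\<beta> \<in> carrier P \<Longrightarrow> lam \<one>\<^bsub>N\<^esub> \<beta> = (\<beta>, \<one>\<^bsub>N\<^esub>)"
    and lam_one_right: "\<alpha> \<in> carrier N \<Longrightarrow> lam \<alpha> \<one>\<^bsub>P\<^esub> = (\<one>\<^bsub>P\<^esub>, \<alpha>)"
    and lam_mult_left: "\<lbrakk>\<alpha> \<in> carrier N; \<alpha>' \<in> carrier N; \<beta> \<in> carrier P\<rbrakk> \<Longrightarrow>
      lam (\<alpha> \<otimes>\<^bsub>N\<^esub> \<alpha>') \<beta> =
        (fst (lam \<alpha> (fst (lam \<alpha>' \<beta>))), snd (lam \<alpha> (fst (lam \<alpha>' \<beta>))) \<otimes>\<^bsub>N\<^esub> snd (lam \<alpha>' \<beta>))"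
    and lam_mult_right: "\<lbrakk>\<alpha> \<in> carrier N; \<beta> \<in> carrier P; \<beta>' \<in> carrier P\<rbrakk> \<Longrightarrow>
      lam \<alpha> (\<beta> \<otimes>\<^bsub>P\<^esub> \<beta>') =
        (fst (lam \<alpha> \<beta>) \<otimes>\<^bsub>P\<^esub> fst (lam (snd (lam \<alpha> \<beta>)) \<beta>'), snd (lam (snd (lam \<alpha> \<beta>)) \<beta>'))"
begin

lemma lam_fst_closed: "\<lbrakk>\<alpha> \<in> carrier N; \<beta> \<in> carrier P\<rbrakk> \<Longrightarrow> fst (lam \<alpha> \<beta>) \<in> carrier P"
  and lam_snd_closed: "\<lbrakk>\<alpha> \<in> carrier N; \<beta> \<in> carrier P\<rbrakk> \<Longrightarrow> snd (lam \<alpha> \<beta>) \<in> carrier N"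
  using lam_closed by (auto simp: mem_Times_iff)

abbreviation dlam :: "'p \<Rightarrow> 'n \<Rightarrow> 'n \<times> 'p" where
  "dlam \<equiv> dual_lam N P lam"

lemma dual_lam_eq:
  "dlam \<beta> \<alpha> =
    (inv\<^bsub>N\<^esub> (snd (lam (inv\<^bsub>N\<^esub> \<alpha>) (inv\<^bsub>P\<^esub> \<beta>))), inv\<^bsub>P\<^esub> (fst (lam (inv\<^bsub>N\<^esub> \<alpha>) (inv\<^bsub>P\<^esub> \<beta>))))"
  unfolding dual_lam_def Let_def by simp

lemma dual_lam_mult_left:
  assumes "\<beta> \<in> carrier P" "\<beta>' \<in> carrier P" "\<alpha> \<in> carrier N"
  shows "dlam (\<beta> \<otimes>\<^bsub>P\<^esub> \<beta>') \<alpha> =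
    (fst (dlam \<beta> (fst (dlam \<beta>' \<alpha>))), snd (dlam \<beta> (fst (dlam \<beta>' \<alpha>))) \<otimes>\<^bsub>P\<^esub> snd (dlam \<beta>' \<alpha>))"
proof -
  define r where "r = lam (inv\<^bsub>N\<^esub> \<alpha>) (inv\<^bsub>P\<^esub> \<beta>')"
  define s where "s = lam (snd r) (inv\<^bsub>P\<^esub> \<beta>)"
  have r: "fst r \<in> carrier P" "snd r \<in> carrier N"
    using assms lam_fst_closed lam_snd_closed by (simp_all add: r_def)
  have s: "fst s \<in> carrier P" "snd s \<in> carrier N"
    using assms r lam_fst_closed lam_snd_closed by (simp_all add: s_def)
  have "dlam (\<beta> \<otimes>\<^bsub>P\<^esub> \<beta>') \<alpha> = (inv\<^bsub>N\<^esub> (snd s), inv\<^bsub>P\<^esub> (fst r \<otimes>\<^bsub>P\<^esub> fst s))"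
    using assms lam_mult_right[of "inv\<^bsub>N\<^esub> \<alpha>" "inv\<^bsub>P\<^esub> \<beta>'" "inv\<^bsub>P\<^esub> \<beta>"]
    by (simp add: dual_lam_eq P.inv_mult_group r_def s_def)
  also have "\<dots> = (fst (dlam \<beta> (fst (dlam \<beta>' \<alpha>))), snd (dlam \<beta> (fst (dlam \<beta>' \<alpha>))) \<otimes>\<^bsub>P\<^esub> snd (dlam \<beta>' \<alpha>))"
    using r s by (simp add: dual_lam_eq P.inv_mult_group r_def[symmetric] s_def[symmetric])
  finally show ?thesis .
qed

lemma dual_lam_mult_right:
  assumes "\<beta> \<in> carrier P" "\<alpha> \<in> carrier N" "\<alpha>' \<in> carrier N"
  shows "dlam \<beta> (\<alpha> \<otimes>\<^bsub>N\<^esub> \<alpha>') =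
    (fst (dlam \<beta> \<alpha>) \<otimes>\<^bsub>N\<^esub> fst (dlam (snd (dlam \<beta> \<alpha>)) \<alpha>'), snd (dlam (snd (dlam \<beta> \<alpha>)) \<alpha>'))"
proof -
  define r where "r = lam (inv\<^bsub>N\<^esub> \<alpha>) (inv\<^bsub>P\<^esub> \<beta>)"
  define s where "s = lam (inv\<^bsub>N\<^esub> \<alpha>') (fst r)"
  have r: "fst r \<in> carrier P" "snd r \<in> carrier N"
    using assms lam_fst_closed lam_snd_closed by (simp_all add: r_def)
  have s: "fst s \<in> carrier P" "snd s \<in> carrier N"
    using assms r lam_fst_closed lam_snd_closed by (simp_all add: s_def)
  have "dlam \<beta> (\<alpha> \<otimes>\<^bsub>N\<^esub> \<alpha>') = (inv\<^bsub>N\<^esub> (snd s \<otimes>\<^bsub>N\<^esub> snd r), inv\<^bsub>P\<^esub> (fst s))"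
    using assms lam_mult_left[of "inv\<^bsub>N\<^esub> \<alpha>'" "inv\<^bsub>N\<^esub> \<alpha>" "inv\<^bsub>P\<^esub> \<beta>"]
    by (simp add: dual_lam_eq N.inv_mult_group r_def s_def)
  also have "\<dots> = (fst (dlam \<beta> \<alpha>) \<otimes>\<^bsub>N\<^esub> fst (dlam (snd (dlam \<beta> \<alpha>)) \<alpha>'), snd (dlam (snd (dlam \<beta> \<alpha>)) \<alpha>'))"
    using r s by (simp add: dual_lam_eq N.inv_mult_group r_def[symmetric] s_def[symmetric])
  finally show ?thesis .
qed

lemma distributive_law_dual_lam: "distributive_law P N dlam"
proof unfold_locales
  show "dlam \<beta> \<alpha> \<in> carrier N \<times> carrier P" if "\<beta> \<in> carrier P" "\<alpha> \<in> carrier N" for \<beta> \<alpha>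
    using that lam_fst_closed lam_snd_closed by (simp add: dual_lam_eq)
qed (simp_all only: dual_lam_mult_left dual_lam_mult_right,
     simp_all add: dual_lam_eq lam_one_left lam_one_right)

end

definition actions_interchange ::
  "'a evstruct \<Rightarrow> ('n, 'm1) monoid_scheme \<Rightarrow> ('n \<Rightarrow> 'a \<Rightarrow> 'a)
     \<Rightarrow> ('p, 'm2) monoid_scheme \<Rightarrow> ('p \<Rightarrow> 'a \<Rightarrow> 'a) \<Rightarrow> ('n \<Rightarrow> 'p \<Rightarrow> 'p \<times> 'n) \<Rightarrow> bool" where
  "actions_interchange E N actN P actP lam \<longleftrightarrow>
     (\<forall>\<alpha>\<in>carrier N. \<forall>\<beta>\<in>carrier P. \<forall>a\<in>ev E.
        actN \<alpha> (actP \<beta> a) = actP (fst (lam \<alpha> \<beta>)) (actN (snd (lam \<alpha> \<beta>)) a))"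

lemma actions_interchange_dual_lam:
  assumes actN: "group_action N E actN" and actP: "group_action P E actP"
    and lam_closed: "\<And>\<alpha> \<beta>. \<lbrakk>\<alpha> \<in> carrier N; \<beta> \<in> carrier P\<rbrakk> \<Longrightarrow> lam \<alpha> \<beta> \<in> carrier P \<times> carrier N"
    and interchange: "actions_interchange E N actN P actP lam"
  shows "actions_interchange E P actP N actN (dual_lam N P lam)"
  unfolding actions_interchange_def
proof (intro ballI)
  fix \<beta> \<alpha> a assume \<beta>: "\<beta> \<in> carrier P" and \<alpha>: "\<alpha> \<in> carrier N" and a: "a \<in> ev E"
  interpret N: group N using actN unfolding group_action_def by blast
  interpret P: group P using actP unfolding group_action_def by blast
  define r where "r = lam (inv\<^bsub>N\<^esub> \<alpha>) (inv\<^bsub>P\<^esub> \<beta>)"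
  have r: "fst r \<in> carrier P" "snd r \<in> carrier N"
    using lam_closed[of "inv\<^bsub>N\<^esub> \<alpha>" "inv\<^bsub>P\<^esub> \<beta>"] \<alpha> \<beta> by (auto simp: r_def mem_Times_iff)
  define c where "c = actN (inv\<^bsub>N\<^esub> (snd r)) (actP (inv\<^bsub>P\<^esub> (fst r)) a)"
  have c: "c \<in> ev E"
    unfolding c_def using group_action_closed[OF actN] group_action_closed[OF actP] r a by simp
  \<comment> \<open>the interchange law at \<open>(\<alpha>\<inverse>, \<beta>\<inverse>)\<close>, evaluated at \<open>c\<close>, says \<open>\<alpha>\<inverse> \<beta>\<inverse> c = a\<close>\<close>
  have "actN (inv\<^bsub>N\<^esub> \<alpha>) (actP (inv\<^bsub>P\<^esub> \<beta>) c) = actP (fst r) (actN (snd r) c)"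
    using interchange \<alpha> \<beta> c unfolding actions_interchange_def r_def by simp
  also have "\<dots> = a"
    unfolding c_def using group_action_inv_cancel[OF actN] group_action_inv_cancel[OF actP]
      group_action_closed[OF actP] r a by simp
  finally have "actP \<beta> (actN \<alpha> a) =
      actP \<beta> (actN \<alpha> (actN (inv\<^bsub>N\<^esub> \<alpha>) (actP (inv\<^bsub>P\<^esub> \<beta>) c)))"
    by simp
  also have "\<dots> = c"
    using group_action_inv_cancel[OF actN] group_action_inv_cancel[OF actP]
      group_action_closed[OF actP] \<alpha> \<beta> c by simp
  finally have "actP \<beta> (actN \<alpha> a) = c" .
  then show "actP \<beta> (actN \<alpha> a) =
      actN (fst (dual_lam N P lam \<beta> \<alpha>)) (actP (snd (dual_lam N P lam \<beta> \<alpha>)) a)"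
    by (simp add: dual_lam_def Let_def r_def[symmetric] c_def)
qed

lemma game_iff:
  "game E N actN P actP lam \<longleftrightarrow>
     event_structure E \<and> negative_action N E actN \<and> positive_action P E actP \<and>
     distributive_law N P lam \<and> actions_interchange E N actN P actP lam"
  unfolding game_def distributive_law_def distributive_law_axioms_def actions_interchange_def
    negative_action_def positive_action_def group_action_def
  by (simp only: Ball_def) fastforce

theorem mainTheorem1:
  fixes E :: "'a evstruct"
    and N :: "('n, 'm1) monoid_scheme" and actN :: "'n \<Rightarrow> 'a \<Rightarrow> 'a"
    and P :: "('p, 'm2) monoid_scheme" and actP :: "'p \<Rightarrow> 'a \<Rightarrow> 'a"
    and lam :: "'n \<Rightarrow> 'p \<Rightarrow> 'p \<times> 'n"
  assumes "game E N actN P actP lam"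
  shows "game (dual_es E) P actP N actN (dual_lam N P lam)"
proof -
  have es: "event_structure E"
    and actN: "negative_action N E actN" and actP: "positive_action P E actP"
    and law: "distributive_law N P lam" and interchange: "actions_interchange E N actN P actP lam"
    using assms by (simp_all add: game_iff)
  have "actions_interchange E P actP N actN (dual_lam N P lam)"
    using actN actP interchange distributive_law.lam_closed[OF law]
    by (intro actions_interchange_dual_lam) (auto simp: negative_action_def positive_action_def)
  then show ?thesis
    using es actN actP distributive_law.distributive_law_dual_lam[OF law]
    by (simp add: game_iff actions_interchange_def)
qed

end
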